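(* Assume the setting described in the context, and fix a motion parameter $x=(x_R,x_T)\in\mathbb{R}\times\mathbb{R}^2$. Suppose that for every $i\in\{1,\dots,N\}$ the point $a_i$ and its match $a_{\pi(x,i)}$ lie on the same curve $\gamma^{(i)}$ of the environment, and that $\kappa\,|s_i-s_{\pi(x,i)}|\le 1$. Define the cost with matching frozen at its value for $x=0$, $$J_{\mathrm{fix}}(x):=\sum_{i=1}^N\big[(a_i+d_i(x)-a_{\pi(0,i)})\cdot n_i\big]^2=\sum_{i=1}^N \big(d_i(x)\cdot n_i\big)^2 .$$ This is a quadratic form in $x$. It coincides with the second-order Taylor expansion at $x=0$ of the cost with frozen matching, whose value and gradient at $0$ vanish. Define also the true (rematched) point-to-plane ICP cost $$J_{\mathrm{ICP}}(x):=\sum_{i=1}^N\big[(a_i+d_i(x)-a_{\pi(x,i)})\cdot n_i\big]^2 .$$ Then $$|J_{\mathrm{ICP}}(x)-J_{\mathrm{fix}}(x)|\le \sum_{i=1}^N\Big(16\,\kappa\,\|d_i(x)\|^3+64\,\kappa^2\,\|d_i(x)\|^4\Big).$$ Consequently $J_{\mathrm{ICP}}(x)=J_{\mathrm{fix}}(x)+O(\kappa\|x\|^3)$, even for displacements large enough that rematching occurs ($\pi(x,\cdot)\neq\pi(0,\cdot)$). In particular, if $\kappa=0$ (environment made of straight segments/lines), then $J_{\mathrm{ICP}}(x)=J_{\mathrm{fix}}(x)$ exactly.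
   Context: 2D setting. The environment is a finite union of pairwise disjoint $C^2$ curves in $\mathbb{R}^2$. Each curve $\gamma$ is parametrized by arc length $s$, so $\|\gamma'(s)\|=1$, and has curvature bounded by $\kappa\ge 0$, i.e. $\|\gamma''(s)\|\le\kappa$ for all $s$. A point cloud $a_1,\dots,a_N\in\mathbb{R}^2$ consists of distinct points on these curves. Write $a_k=\gamma(s_k)$, where $s_k$ is the arc-length abscissa of $a_k$ on the curve containing it. For each $i$, $n_i$ is a unit normal vector to that curve at $a_i$, so $n_i\cdot\gamma'(s_i)=0$. For a motion parameter $x=(x_R,x_T)\in\mathbb{R}\times\mathbb{R}^2$, the linearized displacement of $a_i$ is $d_i(x):=x_R\times a_i+x_T$. Here, for a scalar $x_R$ and $a=(a^1,a^2)$, $x_R\times a:=x_R(-a^2,a^1)$. Thus the displaced cloud is $\{a_i+d_i(x)\}$. $\pi(x,i)$ denotes an index $j\in\{1,\dots,N\}$ minimizing $\|a_i+d_i(x)-a_j\|$, i.e. closest-point matching of the displaced point to the original cloud. Note $\pi(0,i)=i$. *)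

theory Defs
  imports "HOL-Analysis.Analysis"
begin

text \<open>Planar "cross product" of a scalar rotation parameter with a point:
  xR \<times> a = xR (-a2, a1).\<close>
definition scross :: "real \<Rightarrow> real^2 \<Rightarrow> real^2" where
  "scross xR a = xR *\<^sub>R vector [- (a $ 2), a $ 1]"

text \<open>Linearized displacement d(x) of a point a for x = (xR, xT).\<close>
definition disp :: "real \<Rightarrow> real^2 \<Rightarrow> real^2 \<Rightarrow> real^2" where
  "disp xR xT a = scross xR a + xT"

definition environment ::
  "nat \<Rightarrow> (nat \<Rightarrow> real set) \<Rightarrow> (nat \<Rightarrow> real \<Rightarrow> real^2) \<Rightarrow> (nat \<Rightarrow> real \<Rightarrow> real^2)
   \<Rightarrow> (nat \<Rightarrow> real \<Rightarrow> real^2) \<Rightarrow> real \<Rightarrow> bool" where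
  "environment M D gam gam1 gam2 kappa \<longleftrightarrow>
     kappa \<ge> 0 \<and>
     (\<forall>c<M. is_interval (D c) \<and> interior (D c) \<noteq> {} \<and>
        (\<forall>t\<in>D c. (gam c has_vector_derivative gam1 c t) (at t within D c)) \<and>
        (\<forall>t\<in>D c. (gam1 c has_vector_derivative gam2 c t) (at t within D c)) \<and>
        continuous_on (D c) (gam2 c) \<and>
        (\<forall>t\<in>D c. norm (gam1 c t) = 1) \<and>
        (\<forall>t\<in>D c. norm (gam2 c t) \<le> kappa)) \<and>
     (\<forall>c<M. \<forall>c'<M. c \<noteq> c' \<longrightarrow> gam c ` D c \<inter> gam c' ` D c' = {})"

definition point_cloud ::
  "nat \<Rightarrow> (nat \<Rightarrow> real set) \<Rightarrow> (nat \<Rightarrow> real \<Rightarrow> real^2) \<Rightarrow> (nat \<Rightarrow> real \<Rightarrow> real^2)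
   \<Rightarrow> nat \<Rightarrow> (nat \<Rightarrow> real^2) \<Rightarrow> (nat \<Rightarrow> nat) \<Rightarrow> (nat \<Rightarrow> real) \<Rightarrow> (nat \<Rightarrow> real^2) \<Rightarrow> bool" where
  "point_cloud M D gam gam1 N a cv s n \<longleftrightarrow>
     inj_on a {..<N} \<and>
     (\<forall>k<N. cv k < M \<and> s k \<in> D (cv k) \<and> a k = gam (cv k) (s k) \<and>
        norm (n k) = 1 \<and> n k \<bullet> gam1 (cv k) (s k) = 0)"

definition closest_matching ::
  "nat \<Rightarrow> (nat \<Rightarrow> real^2) \<Rightarrow> real \<Rightarrow> real^2 \<Rightarrow> (nat \<Rightarrow> nat) \<Rightarrow> bool" where
  "closest_matching N a xR xT p \<longleftrightarrow>
     (\<forall>i<N. p i < N \<and>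
        (\<forall>j<N. norm (a i + disp xR xT (a i) - a (p i)) \<le> norm (a i + disp xR xT (a i) - a j)))"

text \<open>Cost with matching frozen at x = 0 (where pi(0,i) = i).\<close>
definition J_fix :: "nat \<Rightarrow> (nat \<Rightarrow> real^2) \<Rightarrow> (nat \<Rightarrow> real^2) \<Rightarrow> real \<Rightarrow> real^2 \<Rightarrow> real" where
  "J_fix N a n xR xT = (\<Sum>i<N. (disp xR xT (a i) \<bullet> n i)^2)"

definition J_ICP ::
  "nat \<Rightarrow> (nat \<Rightarrow> real^2) \<Rightarrow> (nat \<Rightarrow> real^2) \<Rightarrow> (nat \<Rightarrow> nat) \<Rightarrow> real \<Rightarrow> real^2 \<Rightarrow> real" where
  "J_ICP N a n p xR xT = (\<Sum>i<N. ((a i + disp xR xT (a i) - a (p i)) \<bullet> n i)^2)"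

end

theory Submission
  imports Defs
begin

(* For a single point a_i = gam(u) with displacement d = d_i(x), matched to
   a_{pi(x,i)} = gam(v) on the same curve, write b = gam(v) - gam(u) for the
   chord. The i-th ICP residual is (d - b) . n_i, while the frozen one is d . n_i.
   A first-order Taylor bound with curvature kappa shows that b deviates from the
   tangent step (v - u) gam'(u) by at most kappa (v - u)^2 / 2; since n_i is
   normal to gam'(u), |b . n_i| <= kappa (v - u)^2 / 2, and along the tangent
   |v - u| <= 2 |b| whenever kappa |v - u| <= 1. Closest-point matching gives
   |b| <= 2 |d|, hence |b . n_i| <= 8 kappa |d|^2, and expanding the squares
   yields the per-point error 16 kappa |d|^3 + 64 kappa^2 |d|^4. *)

lemma mvt_between:
  fixes f :: "real \<Rightarrow> real"
  assumes S: "is_interval S"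
    and df: "\<And>t. t \<in> S \<Longrightarrow> (f has_real_derivative f' t) (at t within S)"
    and u: "u \<in> S" and v: "v \<in> S"
  obtains x where "x \<in> closed_segment u v" "f v - f u = f' x * (v - u)"
proof -
  have mvt_ordered: "\<exists>x\<in>{l..r}. f r - f l = f' x * (r - l)"
    if "l \<le> r" "l \<in> S" "r \<in> S" for l r
  proof (rule mvt_very_simple[OF \<open>l \<le> r\<close>, where f'="\<lambda>x h. f' x * h"])
    fix x assume "l \<le> x" "x \<le> r"
    have sub: "{l..r} \<subseteq> S"
      using S that unfolding is_interval_1 subset_iff atLeastAtMost_iff by blast
    with \<open>l \<le> x\<close> \<open>x \<le> r\<close> have "x \<in> S" by auto
    from has_derivative_subset[OF df[OF this, unfolded has_field_derivative_def] sub]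
    show "(f has_derivative (\<lambda>h. f' x * h)) (at x within {l..r})" .
  qed
  show ?thesis
  proof (cases "u \<le> v")
    case True
    then show ?thesis using mvt_ordered[OF True u v] that by (auto simp: closed_segment_eq_real_ivl)
  next
    case False
    then have "v \<le> u" by simp
    from mvt_ordered[OF this v u] obtain x where "x \<in> {v..u}" "f u - f v = f' x * (u - v)" by blast
    then show ?thesis using that[of x] False by (auto simp: closed_segment_eq_real_ivl algebra_simps)
  qed
qed

text \<open>The MVT applied to
  f - (tangent line) - K (r - u)^2 / 2 works for both orders of u and v because the
  intermediate point x satisfies (x - u) (v - u) \<ge> 0.\<close>

lemma taylor1_upper:
  fixes f f1 f2 :: "real \<Rightarrow> real"
  assumes S: "is_interval S"
    and d1: "\<And>t. t \<in> S \<Longrightarrow> (f has_real_derivative f1 t) (at t within S)"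
    and d2: "\<And>t. t \<in> S \<Longrightarrow> (f1 has_real_derivative f2 t) (at t within S)"
    and K: "\<And>t. t \<in> S \<Longrightarrow> \<bar>f2 t\<bar> \<le> K"
    and u: "u \<in> S" and v: "v \<in> S"
  shows "f v - f u - f1 u * (v - u) \<le> K * (v - u)^2 / 2"
proof -
  define phi where "phi r = f r - f u - f1 u * (r - u) - K * (r - u)^2 / 2" for r
  have dphi: "(phi has_real_derivative f1 r - f1 u - K * (r - u)) (at r within S)"
    if "r \<in> S" for r
  proof -
    have "(phi has_real_derivative
            f1 r - 0 - f1 u * (1 - 0) - K * ((1 - 0) * (r - u) + (1 - 0) * (r - u)) / 2) (at r within S)"
      unfolding phi_def power2_eq_square
      by (intro derivative_intros DERIV_cmult DERIV_cdivide DERIV_mult d1[OF that])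
    then show ?thesis by (rule DERIV_cong) (simp add: field_simps)
  qed
  obtain x where x: "x \<in> closed_segment u v" "phi v - phi u = (f1 x - f1 u - K * (x - u)) * (v - u)"
    using mvt_between[OF S dphi u v] by metis
  have "x \<in> S"
    using x(1) S u v by (meson convex_contains_segment is_interval_convex subsetD)
  have lip: "\<bar>f1 x - f1 u\<bar> \<le> K * \<bar>x - u\<bar>"
    using field_differentiable_bound[OF is_interval_convex[OF S] d2, of K x u] K \<open>x \<in> S\<close> u by simp
  have same_side: "(x - u) * (v - u) \<ge> 0"
    using x(1) by (auto simp: closed_segment_eq_real_ivl zero_le_mult_iff split: if_splits)
  have "(f1 x - f1 u) * (v - u) \<le> \<bar>f1 x - f1 u\<bar> * \<bar>v - u\<bar>"
    by (metis abs_ge_self abs_mult)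
  also have "\<dots> \<le> K * \<bar>x - u\<bar> * \<bar>v - u\<bar>"
    using lip by (rule mult_right_mono) simp
  also have "\<dots> = K * ((x - u) * (v - u))"
    using same_side by (simp add: abs_mult[symmetric] mult.assoc)
  finally have "(f1 x - f1 u) * (v - u) \<le> K * ((x - u) * (v - u))" .
  then have "phi v \<le> phi u" using x(2) by (simp add: algebra_simps)
  then show ?thesis by (simp add: phi_def)
qed

lemma taylor1_abs:
  fixes f f1 f2 :: "real \<Rightarrow> real"
  assumes S: "is_interval S"
    and d1: "\<And>t. t \<in> S \<Longrightarrow> (f has_real_derivative f1 t) (at t within S)"
    and d2: "\<And>t. t \<in> S \<Longrightarrow> (f1 has_real_derivative f2 t) (at t within S)"
    and K: "\<And>t. t \<in> S \<Longrightarrow> \<bar>f2 t\<bar> \<le> K"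
    and u: "u \<in> S" and v: "v \<in> S"
  shows "\<bar>f v - f u - f1 u * (v - u)\<bar> \<le> K * (v - u)^2 / 2"
proof -
  have "(\<lambda>t. - f t) v - (\<lambda>t. - f t) u - (\<lambda>t. - f1 t) u * (v - u) \<le> K * (v - u)^2 / 2"
  proof (rule taylor1_upper[OF S _ _ _ u v])
    fix t assume "t \<in> S"
    show "((\<lambda>t. - f t) has_real_derivative - f1 t) (at t within S)"
      by (rule DERIV_minus[OF d1[OF \<open>t \<in> S\<close>]])
    show "((\<lambda>t. - f1 t) has_real_derivative - f2 t) (at t within S)"
      by (rule DERIV_minus[OF d2[OF \<open>t \<in> S\<close>]])
    show "\<bar>- f2 t\<bar> \<le> K" using K[OF \<open>t \<in> S\<close>] by simp
  qed
  moreover have "f v - f u - f1 u * (v - u) \<le> K * (v - u)^2 / 2"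
    by (rule taylor1_upper[OF S d1 d2 K u v])
  ultimately show ?thesis unfolding abs_le_iff by (simp add: algebra_simps)
qed

lemma curve_taylor:
  fixes g g1 g2 :: "real \<Rightarrow> 'a::real_inner"
  assumes S: "is_interval S"
    and d1: "\<forall>t\<in>S. (g has_vector_derivative g1 t) (at t within S)"
    and d2: "\<forall>t\<in>S. (g1 has_vector_derivative g2 t) (at t within S)"
    and K: "\<forall>t\<in>S. norm (g2 t) \<le> K"
    and u: "u \<in> S" and v: "v \<in> S"
  shows "\<bar>(g v - g u) \<bullet> w - (g1 u \<bullet> w) * (v - u)\<bar> \<le> K * norm w * (v - u)^2 / 2"
proof -
  have "\<bar>(\<lambda>t. g t \<bullet> w) v - (\<lambda>t. g t \<bullet> w) u - (\<lambda>t. g1 t \<bullet> w) u * (v - u)\<bar>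
        \<le> K * norm w * (v - u)^2 / 2"
  proof (rule taylor1_abs[OF S _ _ _ u v])
    fix t assume t: "t \<in> S"
    show "((\<lambda>t. g t \<bullet> w) has_real_derivative g1 t \<bullet> w) (at t within S)"
      unfolding has_real_derivative_iff_has_vector_derivative
      using bounded_linear.has_vector_derivative[OF bounded_linear_inner_left d1[rule_format, OF t]] .
    show "((\<lambda>t. g1 t \<bullet> w) has_real_derivative g2 t \<bullet> w) (at t within S)"
      unfolding has_real_derivative_iff_has_vector_derivative
      using bounded_linear.has_vector_derivative[OF bounded_linear_inner_left d2[rule_format, OF t]] .
    have "\<bar>g2 t \<bullet> w\<bar> \<le> norm (g2 t) * norm w" by (rule Cauchy_Schwarz_ineq2)
    also have "\<dots> \<le> K * norm w" using K t by (simp add: mult_right_mono)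
    finally show "\<bar>g2 t \<bullet> w\<bar> \<le> K * norm w" .
  qed
  then show ?thesis by (simp add: inner_diff_left)
qed

lemma arc_le_twice_chord:
  fixes b T :: "'a::real_inner" and kappa h :: real
  assumes bT: "\<bar>b \<bullet> T - h\<bar> \<le> kappa * h^2 / 2"
    and T: "norm T = 1" and kh: "kappa * \<bar>h\<bar> \<le> 1"
  shows "\<bar>h\<bar> \<le> 2 * norm b"
proof -
  have "kappa * h^2 = (kappa * \<bar>h\<bar>) * \<bar>h\<bar>" by (simp add: power2_eq_square)
  also have "\<dots> \<le> \<bar>h\<bar>" using mult_right_mono[OF kh abs_ge_zero[of h]] by simp
  finally have "kappa * h^2 \<le> \<bar>h\<bar>" .
  moreover have "\<bar>b \<bullet> T\<bar> \<le> norm b"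
    using Cauchy_Schwarz_ineq2[of b T] T by simp
  ultimately show ?thesis using bT by linarith
qed

text \<open>A closest-point match never moves a displaced point farther than its
  original position, so the matching chord b is at most twice the displacement d.\<close>

lemma closest_chord_le:
  fixes b d :: "'a::real_normed_vector"
  assumes "norm (d - b) \<le> norm d"
  shows "norm b \<le> 2 * norm d"
  using norm_triangle_ineq4[of d "d - b"] assms by simp

lemma squared_residual_perturbation:
  fixes b d n :: "'a::real_inner"
  assumes n: "norm n = 1" and bn: "\<bar>b \<bullet> n\<bar> \<le> e"
  shows "\<bar>((d - b) \<bullet> n)^2 - (d \<bullet> n)^2\<bar> \<le> e^2 + 2 * norm d * e"
proof -
  have dn: "\<bar>d \<bullet> n\<bar> \<le> norm d" using Cauchy_Schwarz_ineq2[of d n] n by simp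
  have "((d - b) \<bullet> n)^2 - (d \<bullet> n)^2 = (b \<bullet> n)^2 - 2 * (d \<bullet> n) * (b \<bullet> n)"
    by (simp add: power2_eq_square algebra_simps)
  also have "\<bar>\<dots>\<bar> \<le> \<bar>b \<bullet> n\<bar>^2 + 2 * \<bar>d \<bullet> n\<bar> * \<bar>b \<bullet> n\<bar>"
    using abs_triangle_ineq4[of "(b \<bullet> n)^2" "2 * (d \<bullet> n) * (b \<bullet> n)"] by (simp add: abs_mult)
  also have "\<dots> \<le> e^2 + 2 * norm d * e"
    using bn dn by (intro add_mono power_mono mult_mono) auto
  finally show ?thesis .
qed

text \<open>The
  chord b = g v - g u has normal component \<le> \<kappa> (v-u)^2/2 \<le> 8 \<kappa> \<parallel>d\<parallel>^2, since
  |v - u| \<le> 2 \<parallel>b\<parallel> \<le> 4 \<parallel>d\<parallel>; this controls the change of the squared residual.\<close>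

lemma matched_residual_error:
  fixes g g1 g2 :: "real \<Rightarrow> 'a::real_inner" and d n :: 'a and kappa :: real
  assumes S: "is_interval S"
    and d1: "\<forall>t\<in>S. (g has_vector_derivative g1 t) (at t within S)"
    and d2: "\<forall>t\<in>S. (g1 has_vector_derivative g2 t) (at t within S)"
    and curv: "\<forall>t\<in>S. norm (g2 t) \<le> kappa" and k0: "kappa \<ge> 0"
    and u: "u \<in> S" and v: "v \<in> S"
    and unit_tangent: "norm (g1 u) = 1"
    and n: "norm n = 1" and normal: "n \<bullet> g1 u = 0"
    and kh: "kappa * \<bar>v - u\<bar> \<le> 1"
    and closest: "norm (d - (g v - g u)) \<le> norm d"
  shows "\<bar>((d - (g v - g u)) \<bullet> n)^2 - (d \<bullet> n)^2\<bar>
         \<le> 16 * kappa * norm d ^ 3 + 64 * kappa^2 * norm d ^ 4"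
proof -
  define b where "b = g v - g u"
  have bn: "\<bar>b \<bullet> n\<bar> \<le> kappa * (v - u)^2 / 2"
    using curve_taylor[OF S d1 d2 curv u v, of n] n normal
    by (simp add: b_def inner_commute)
  have "\<bar>b \<bullet> g1 u - (v - u)\<bar> \<le> kappa * (v - u)^2 / 2"
    using curve_taylor[OF S d1 d2 curv u v, of "g1 u"] unit_tangent
    by (simp add: b_def dot_square_norm)
  then have "\<bar>v - u\<bar> \<le> 2 * norm b"
    using arc_le_twice_chord unit_tangent kh by blast
  also have "\<dots> \<le> 4 * norm d"
    using closest_chord_le[of d b] closest by (simp add: b_def)
  finally have "(v - u)^2 \<le> (4 * norm d)^2"
    by (metis abs_ge_zero power2_abs power_mono)
  then have "\<bar>b \<bullet> n\<bar> \<le> 8 * kappa * norm d ^ 2"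
    using bn mult_left_mono[OF _ k0] by (fastforce simp: power_mult_distrib)
  from squared_residual_perturbation[OF n this, of d]
  show ?thesis
    by (simp add: b_def power2_eq_square power3_eq_cube power4_eq_xxxx algebra_simps)
qed

lemma icp_term_error:
  assumes env: "environment M D gam gam1 gam2 kappa"
    and cloud: "point_cloud M D gam gam1 N a cv s n"
    and match: "closest_matching N a xR xT p"
    and same_curve: "cv (p i) = cv i"
    and close: "kappa * \<bar>s i - s (p i)\<bar> \<le> 1"
    and i: "i < N"
  shows "\<bar>((a i + disp xR xT (a i) - a (p i)) \<bullet> n i)^2 - (disp xR xT (a i) \<bullet> n i)^2\<bar>
         \<le> 16 * kappa * norm (disp xR xT (a i)) ^ 3 + 64 * kappa^2 * norm (disp xR xT (a i)) ^ 4"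
proof -
  define c where "c = cv i"
  define d where "d = disp xR xT (a i)"
  have pi: "p i < N"
    using match i unfolding closest_matching_def by simp
  have c: "c < M" and u: "s i \<in> D c" and ai: "a i = gam c (s i)"
    and n: "norm (n i) = 1" and normal: "n i \<bullet> gam1 c (s i) = 0"
    using cloud i unfolding point_cloud_def c_def by auto
  have v: "s (p i) \<in> D c" and api: "a (p i) = gam c (s (p i))"
    using cloud pi same_curve unfolding point_cloud_def c_def by auto
  have curve: "is_interval (D c)"
      "\<forall>t\<in>D c. (gam c has_vector_derivative gam1 c t) (at t within D c)"
      "\<forall>t\<in>D c. (gam1 c has_vector_derivative gam2 c t) (at t within D c)"
      "\<forall>t\<in>D c. norm (gam2 c t) \<le> kappa" "kappa \<ge> 0"
      "norm (gam1 c (s i)) = 1"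
    using env c u unfolding environment_def by auto
  have "norm (a i + d - a (p i)) \<le> norm (a i + d - a i)"
    using match i pi unfolding closest_matching_def d_def by blast
  then have closest: "norm (d - (gam c (s (p i)) - gam c (s i))) \<le> norm d"
    by (simp add: ai api algebra_simps)
  have kh: "kappa * \<bar>s (p i) - s i\<bar> \<le> 1"
    using close by (simp add: abs_minus_commute)
  have residual: "a i + d - a (p i) = d - (gam c (s (p i)) - gam c (s i))"
    by (simp add: ai api)
  have "\<bar>((a i + d - a (p i)) \<bullet> n i)^2 - (d \<bullet> n i)^2\<bar>
             \<le> 16 * kappa * norm d ^ 3 + 64 * kappa^2 * norm d ^ 4"
    unfolding residual by (rule matched_residual_error[OF curve(1-5) u v curve(6) n normal kh closest])
  then show ?thesis by (simp add: d_def)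
qed

theorem theorem1:
  fixes M N :: nat and D :: "nat \<Rightarrow> real set"
    and gam gam1 gam2 :: "nat \<Rightarrow> real \<Rightarrow> real^2" and kappa :: real
    and a n :: "nat \<Rightarrow> real^2" and cv :: "nat \<Rightarrow> nat" and s :: "nat \<Rightarrow> real"
    and xR :: real and xT :: "real^2" and p :: "nat \<Rightarrow> nat"
  assumes env: "environment M D gam gam1 gam2 kappa"
    and cloud: "point_cloud M D gam gam1 N a cv s n"
    and match: "closest_matching N a xR xT p"
    and same_curve: "\<forall>i<N. cv (p i) = cv i"
    and close: "\<forall>i<N. kappa * \<bar>s i - s (p i)\<bar> \<le> 1"
  shows "\<bar>J_ICP N a n p xR xT - J_fix N a n xR xT\<bar>
           \<le> (\<Sum>i<N. 16 * kappa * norm (disp xR xT (a i)) ^ 3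
                     + 64 * kappa ^ 2 * norm (disp xR xT (a i)) ^ 4)
         \<and> (kappa = 0 \<longrightarrow> J_ICP N a n p xR xT = J_fix N a n xR xT)"
proof -
  let ?d = "\<lambda>i. disp xR xT (a i)"
  have "\<bar>J_ICP N a n p xR xT - J_fix N a n xR xT\<bar>
        = \<bar>\<Sum>i<N. ((a i + ?d i - a (p i)) \<bullet> n i)^2 - (?d i \<bullet> n i)^2\<bar>"
    unfolding J_ICP_def J_fix_def by (simp add: sum_subtractf)
  also have "\<dots> \<le> (\<Sum>i<N. \<bar>((a i + ?d i - a (p i)) \<bullet> n i)^2 - (?d i \<bullet> n i)^2\<bar>)"
    by (rule sum_abs)
  also have "\<dots> \<le> (\<Sum>i<N. 16 * kappa * norm (?d i) ^ 3 + 64 * kappa ^ 2 * norm (?d i) ^ 4)"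
    using icp_term_error[OF env cloud match] same_curve close by (intro sum_mono) simp
  finally have bound: "\<bar>J_ICP N a n p xR xT - J_fix N a n xR xT\<bar>
      \<le> (\<Sum>i<N. 16 * kappa * norm (?d i) ^ 3 + 64 * kappa ^ 2 * norm (?d i) ^ 4)" .
  moreover have "J_ICP N a n p xR xT = J_fix N a n xR xT" if "kappa = 0"
    using bound that by simp
  ultimately show ?thesis by blast
qed

end
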